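(* Let $A$ be a strongly AUF algebra, let $M\in\mathrm{Coh}_{\mathrm L}(A)$ be a projective generator of $\mathrm{Coh}_{\mathrm L}(A)$, and let $B=\mathrm{End}_{A,-}(M)^{\mathrm{op}}$, so that $M$ is an $A$-$B$ bimodule. Let $\psi\in\mathrm{SLF}(A)$ and let ${}^\psi\mathrm{Tr}\in\mathrm{SLF}(B)$ be the right pseudotrace associated to $\psi$ and $M$. Then $\psi$ is non-degenerate if and only if ${}^\psi\mathrm{Tr}$ is non-degenerate.
   Context: All algebras are associative $\mathbb C$-algebras, not necessarily unital. An idempotent is an element $e$ with $e^2=e$. An algebra $A$ is AUF if there is a family $(e_i)_{i\in\mathfrak I}$ of mutually orthogonal idempotents with $\dim e_iAe_j<\infty$ for all $i,j$ and $A=\sum_{i,j}e_iAe_j$. A left $A$-module $M$ is quasicoherent if $\xi\in A\xi$ for all $\xi\in M$, coherent if quasicoherent and finitely generated; $\mathrm{Coh}_{\mathrm L}(A)$ is the category of coherent left $A$-modules. Irreducible means nonzero with no nonzero proper submodules. An idempotent $e\in A$ is generating if every irreducible quasicoherent left $A$-module is a quotient of $Ae$; $A$ is strongly AUF if it is AUF and has a generating idempotent. A projective generator of $\mathrm{Coh}_{\mathrm L}(A)$ is an object that is projective as a left $A$-module and such that every object of $\mathrm{Coh}_{\mathrm L}(A)$ is a quotient of a finite direct sum of copies of it. $B=\mathrm{End}_{A,-}(M)^{\mathrm{op}}$ (left $A$-module endomorphisms, opposite multiplication) acts on the right of $M$ by $\xi\cdot T=T(\xi)$. $\mathrm{SLF}(C)$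 is the space of linear $\phi:C\to\mathbb C$ with $\phi(xy)=\phi(yx)$; such $\phi$ is non-degenerate if $\{x\in C:\phi(xy)=0\ \forall y\in C\}=0$. Right pseudotrace: choose an idempotent $e\in A$ and finitely many left $A$-module maps $\beta_j:Ae\to M$, $\check\beta^j:M\to Ae$ with $\sum_j\beta_j\circ\check\beta^j=\mathrm{id}_M$ (such exist); then ${}^\psi\mathrm{Tr}(y)=\sum_j\psi\big(\check\beta^j(\beta_j(e)y)\big)$ for $y\in B$, which is independent of the choices and lies in $\mathrm{SLF}(B)$. *)

theory Defs
  imports Complex_Main
begin

text \<open>The algebra A is the whole type 'a (a non-unital ring) with a complex
 scalar multiplication sc making it an associative C-algebra.\<close>

definition calg :: "(complex \<Rightarrow> 'a::ring \<Rightarrow> 'a) \<Rightarrow> bool" where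
  "calg sc \<longleftrightarrow>
     (\<forall>c x y. sc c (x + y) = sc c x + sc c y) \<and>
     (\<forall>c d x. sc (c + d) x = sc c x + sc d x) \<and>
     (\<forall>c d x. sc (c * d) x = sc c (sc d x)) \<and>
     (\<forall>x. sc 1 x = x) \<and>
     (\<forall>c x y. sc c (x * y) = sc c x * y) \<and>
     (\<forall>c x y. sc c (x * y) = x * sc c y)"

definition cspan :: "(complex \<Rightarrow> 'a::ring \<Rightarrow> 'a) \<Rightarrow> 'a set \<Rightarrow> 'a set" where
  "cspan sc S = {x. \<exists>F c. finite F \<and> F \<subseteq> S \<and> x = (\<Sum>v\<in>F. sc (c v) v)}"

definition fin_dim :: "(complex \<Rightarrow> 'a::ring \<Rightarrow> 'a) \<Rightarrow> 'a set \<Rightarrow> bool" where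
  "fin_dim sc S \<longleftrightarrow> (\<exists>F. finite F \<and> F \<subseteq> S \<and> S \<subseteq> cspan sc F)"

definition corner :: "'a::ring \<Rightarrow> 'a \<Rightarrow> 'a set" where
  "corner e f = {e * a * f | a. True}"

text \<open>AUF: the family of mutually orthogonal idempotents is represented by
 its range E (mutual orthogonality makes repetitions of nonzero members impossible).\<close>
definition AUF :: "(complex \<Rightarrow> 'a::ring \<Rightarrow> 'a) \<Rightarrow> bool" where
  "AUF sc \<longleftrightarrow> (\<exists>E::'a set.
      (\<forall>e\<in>E. e * e = e) \<and>
      (\<forall>e\<in>E. \<forall>f\<in>E. e \<noteq> f \<longrightarrow> e * f = 0) \<and>
      (\<forall>e\<in>E. \<forall>f\<in>E. fin_dim sc (corner e f)) \<and>
      (\<forall>a. \<exists>F g. finite F \<and> F \<subseteq> E \<times> E \<and>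
             (\<forall>p\<in>F. g p \<in> corner (fst p) (snd p)) \<and> a = (\<Sum>p\<in>F. g p)))"

record ('a, 'u) amod =
  mcarrier :: "'u set"
  madd :: "'u \<Rightarrow> 'u \<Rightarrow> 'u"
  mzero :: "'u"
  msc :: "complex \<Rightarrow> 'u \<Rightarrow> 'u"
  mact :: "'a \<Rightarrow> 'u \<Rightarrow> 'u"

definition is_amod :: "(complex \<Rightarrow> 'a::ring \<Rightarrow> 'a) \<Rightarrow> ('a, 'u) amod \<Rightarrow> bool" where
  "is_amod sc M \<longleftrightarrow> (let C = mcarrier M in
     mzero M \<in> C \<and>
     (\<forall>x\<in>C. \<forall>y\<in>C. madd M x y \<in> C) \<and>
     (\<forall>c. \<forall>x\<in>C. msc M c x \<in> C) \<and>
     (\<forall>a. \<forall>x\<in>C. mact M a x \<in> C) \<and>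
     (\<forall>x\<in>C. \<forall>y\<in>C. \<forall>z\<in>C. madd M (madd M x y) z = madd M x (madd M y z)) \<and>
     (\<forall>x\<in>C. \<forall>y\<in>C. madd M x y = madd M y x) \<and>
     (\<forall>x\<in>C. madd M (mzero M) x = x) \<and>
     (\<forall>x\<in>C. madd M x (msc M (-1) x) = mzero M) \<and>
     (\<forall>c. \<forall>x\<in>C. \<forall>y\<in>C. msc M c (madd M x y) = madd M (msc M c x) (msc M c y)) \<and>
     (\<forall>c d. \<forall>x\<in>C. msc M (c + d) x = madd M (msc M c x) (msc M d x)) \<and>
     (\<forall>c d. \<forall>x\<in>C. msc M (c * d) x = msc M c (msc M d x)) \<and>
     (\<forall>x\<in>C. msc M 1 x = x) \<and>
     (\<forall>a. \<forall>x\<in>C. \<forall>y\<in>C. mact M a (madd M x y) = madd M (mact M a x) (mact M a y)) \<and>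
     (\<forall>a b. \<forall>x\<in>C. mact M (a + b) x = madd M (mact M a x) (mact M b x)) \<and>
     (\<forall>a b. \<forall>x\<in>C. mact M (a * b) x = mact M a (mact M b x)) \<and>
     (\<forall>c a. \<forall>x\<in>C. mact M (sc c a) x = msc M c (mact M a x)) \<and>
     (\<forall>c a. \<forall>x\<in>C. mact M a (msc M c x) = msc M c (mact M a x)))"

definition amod_hom :: "('a, 'u) amod \<Rightarrow> ('a, 'v) amod \<Rightarrow> ('u \<Rightarrow> 'v) \<Rightarrow> bool" where
  "amod_hom M N f \<longleftrightarrow>
     (\<forall>x\<in>mcarrier M. f x \<in> mcarrier N) \<and>
     (\<forall>x\<in>mcarrier M. \<forall>y\<in>mcarrier M. f (madd M x y) = madd N (f x) (f y)) \<and>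
     (\<forall>c. \<forall>x\<in>mcarrier M. f (msc M c x) = msc N c (f x)) \<and>
     (\<forall>a. \<forall>x\<in>mcarrier M. f (mact M a x) = mact N a (f x))"

definition quasicoherent :: "('a, 'u) amod \<Rightarrow> bool" where
  "quasicoherent M \<longleftrightarrow> (\<forall>x\<in>mcarrier M. \<exists>a. x = mact M a x)"

definition submod :: "('a, 'u) amod \<Rightarrow> 'u set \<Rightarrow> bool" where
  "submod M S \<longleftrightarrow> S \<subseteq> mcarrier M \<and> mzero M \<in> S \<and>
     (\<forall>x\<in>S. \<forall>y\<in>S. madd M x y \<in> S) \<and>
     (\<forall>c. \<forall>x\<in>S. msc M c x \<in> S) \<and>
     (\<forall>a. \<forall>x\<in>S. mact M a x \<in> S)"

definition gen_submod :: "('a, 'u) amod \<Rightarrow> 'u set \<Rightarrow> 'u set" where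
  "gen_submod M X = \<Inter>{S. submod M S \<and> X \<subseteq> S}"

definition fin_generated :: "('a, 'u) amod \<Rightarrow> bool" where
  "fin_generated M \<longleftrightarrow> (\<exists>X. finite X \<and> X \<subseteq> mcarrier M \<and> gen_submod M X = mcarrier M)"

definition coherent :: "('a, 'u) amod \<Rightarrow> bool" where
  "coherent M \<longleftrightarrow> quasicoherent M \<and> fin_generated M"

definition irreducible :: "('a, 'u) amod \<Rightarrow> bool" where
  "irreducible M \<longleftrightarrow> mcarrier M \<noteq> {mzero M} \<and>
     (\<forall>S. submod M S \<longrightarrow> S = {mzero M} \<or> S = mcarrier M)"

definition Ae_mod :: "(complex \<Rightarrow> 'a::ring \<Rightarrow> 'a) \<Rightarrow> 'a \<Rightarrow> ('a, 'a) amod" where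
  "Ae_mod sc e = \<lparr>mcarrier = {a * e | a. True}, madd = (+), mzero = 0,
                  msc = sc, mact = (*)\<rparr>"

text \<open>Universe type for auxiliary modules: every irreducible
 quasicoherent module, every coherent module, and all modules needed to test
 projectivity of a coherent module are isomorphic to one carried by this type.\<close>
type_synonym 'a univ = "(nat \<Rightarrow> complex \<times> 'a) set"

definition generating_idem :: "(complex \<Rightarrow> 'a::ring \<Rightarrow> 'a) \<Rightarrow> 'a \<Rightarrow> bool" where
  "generating_idem sc e \<longleftrightarrow> e * e = e \<and>
     (\<forall>V :: ('a, 'a univ) amod. is_amod sc V \<and> quasicoherent V \<and> irreducible V \<longrightarrow>
        (\<exists>f. amod_hom (Ae_mod sc e) V f \<and> f ` mcarrier (Ae_mod sc e) = mcarrier V))"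

definition strongly_AUF :: "(complex \<Rightarrow> 'a::ring \<Rightarrow> 'a) \<Rightarrow> bool" where
  "strongly_AUF sc \<longleftrightarrow> AUF sc \<and> (\<exists>e. generating_idem sc e)"

definition projective :: "(complex \<Rightarrow> 'a::ring \<Rightarrow> 'a) \<Rightarrow> ('a, 'm) amod \<Rightarrow> bool" where
  "projective sc M \<longleftrightarrow>
     (\<forall>(N :: ('a, 'a univ) amod) (N' :: ('a, 'a univ) amod) g f.
        is_amod sc N \<and> is_amod sc N' \<and> amod_hom N N' g \<and> g ` mcarrier N = mcarrier N' \<and>
        amod_hom M N' f \<longrightarrow>
        (\<exists>h. amod_hom M N h \<and> (\<forall>x\<in>mcarrier M. g (h x) = f x)))"

definition msum :: "('a, 'u) amod \<Rightarrow> 'u list \<Rightarrow> 'u" where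
  "msum N xs = foldr (madd N) xs (mzero N)"

definition proj_gen_Coh :: "(complex \<Rightarrow> 'a::ring \<Rightarrow> 'a) \<Rightarrow> ('a, 'm) amod \<Rightarrow> bool" where
  "proj_gen_Coh sc M \<longleftrightarrow> coherent M \<and> projective sc M \<and>
     (\<forall>N :: ('a, 'a univ) amod. is_amod sc N \<and> coherent N \<longrightarrow>
        (\<exists>fs. (\<forall>f\<in>set fs. amod_hom M N f) \<and>
           (\<forall>y\<in>mcarrier N. \<exists>xs. length xs = length fs \<and> set xs \<subseteq> mcarrier M \<and>
               y = msum N (map2 (\<lambda>f x. f x) fs xs))))"

definition SLF :: "(complex \<Rightarrow> 'a::ring \<Rightarrow> 'a) \<Rightarrow> ('a \<Rightarrow> complex) \<Rightarrow> bool" where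
  "SLF sc \<psi> \<longleftrightarrow> (\<forall>x y. \<psi> (x + y) = \<psi> x + \<psi> y) \<and> (\<forall>c x. \<psi> (sc c x) = c * \<psi> x) \<and>
     (\<forall>x y. \<psi> (x * y) = \<psi> (y * x))"

definition nondeg_A :: "('a::ring \<Rightarrow> complex) \<Rightarrow> bool" where
  "nondeg_A \<psi> \<longleftrightarrow> (\<forall>x. (\<forall>y. \<psi> (x * y) = 0) \<longrightarrow> x = 0)"

text \<open>B = End_A(M)^op: elements are A-module endomorphisms of M, with
 product x \<cdot> y = y \<circ> x (so that \<xi>\<cdot>T = T \<xi> is a right action); zero is the zero map.\<close>
definition nondeg_B :: "('a, 'm) amod \<Rightarrow> (('m \<Rightarrow> 'm) \<Rightarrow> complex) \<Rightarrow> bool" where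
  "nondeg_B M \<phi> \<longleftrightarrow> (\<forall>x. amod_hom M M x \<and> (\<forall>y. amod_hom M M y \<longrightarrow> \<phi> (y \<circ> x) = 0)
       \<longrightarrow> (\<forall>\<xi>\<in>mcarrier M. x \<xi> = mzero M))"

text \<open>Admissible data for the right pseudotrace: idempotent e and maps
 \<beta>_j : Ae \<rightarrow> M, \<beta>check^j : M \<rightarrow> Ae with sum_j \<beta>_j \<circ> \<beta>check^j = id_M.\<close>
definition pt_data :: "(complex \<Rightarrow> 'a::ring \<Rightarrow> 'a) \<Rightarrow> ('a, 'm) amod \<Rightarrow> 'a \<Rightarrow>
    (('a \<Rightarrow> 'm) \<times> ('m \<Rightarrow> 'a)) list \<Rightarrow> bool" where
  "pt_data sc M e bs \<longleftrightarrow> e * e = e \<and>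
     (\<forall>p\<in>set bs. amod_hom (Ae_mod sc e) M (fst p) \<and> amod_hom M (Ae_mod sc e) (snd p)) \<and>
     (\<forall>\<xi>\<in>mcarrier M. msum M (map (\<lambda>p. fst p (snd p \<xi>)) bs) = \<xi>)"

definition pseudotrace :: "('a::ring \<Rightarrow> complex) \<Rightarrow> 'a \<Rightarrow>
    (('a \<Rightarrow> 'm) \<times> ('m \<Rightarrow> 'a)) list \<Rightarrow> ('m \<Rightarrow> 'm) \<Rightarrow> complex" where
  "pseudotrace \<psi> e bs T = sum_list (map (\<lambda>p. \<psi> (snd p (T (fst p e)))) bs)"

end

theory Submission
  imports Defs
begin

text \<open>
  For a module map \<open>g : M \<rightarrow> A e'\<close>, an element \<open>c \<in> A\<close> and \<open>\<eta> \<in> M\<close>, the map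
  \<open>T : \<zeta> \<mapsto> (g \<zeta> c) \<eta>\<close> is an endomorphism of \<open>M\<close>, and expanding along the data
  \<open>\<beta>\<^sub>j, \<beta>\<^sup>j\<close> of the pseudotrace shows \<open>Tr (y T) = Tr (T y) = \<psi> (c g (y \<eta>))\<close> for every
  endomorphism \<open>y\<close>.

  If \<open>\<psi>\<close> is non-degenerate and \<open>x\<close> lies in the radical of \<open>Tr\<close>, taking \<open>g = \<beta>\<^sup>j\<close>
  gives \<open>\<psi> (\<beta>\<^sup>j (x \<xi>) c) = 0\<close> for all \<open>c\<close>, so every \<open>\<beta>\<^sup>j (x \<xi>)\<close> vanishes and \<open>x = 0\<close>.
  Conversely, if \<open>\<psi> (x A) = 0\<close>, then for \<open>c = x\<close> the endomorphism \<open>T\<close> lies in the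
  radical of \<open>Tr\<close>, hence \<open>T = 0\<close> and \<open>g \<xi> x g' \<eta> = 0\<close> for all module maps \<open>g, g'\<close>
  out of \<open>M\<close>. For a local unit \<open>u\<close> of \<open>x\<close> the coherent module \<open>A u\<close> is generated by
  \<open>M\<close>, so \<open>u\<close> is a sum of such values \<open>g \<xi>\<close>, and \<open>x = u x u = 0\<close>.
\<close>

lemma calgD:
  assumes "calg sc"
  shows "sc c (x + y) = sc c x + sc c y" "sc (c + d) x = sc c x + sc d x"
    "sc (c * d) x = sc c (sc d x)" "sc 1 x = x" "sc c (x * y) = sc c x * y"
    "sc c (x * y) = x * sc c y"
  using assms unfolding calg_def by auto

lemma calg_add_scale_minus_one:
  assumes "calg sc"
  shows "x + sc (-1) x = 0"
proof -
  have "sc 0 x = 0"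
    using calgD(2)[OF assms, of 0 0 x] by simp
  then show ?thesis
    using calgD(2)[OF assms, of 1 "-1" x] calgD(4)[OF assms] by simp
qed

lemma is_amodD:
  assumes "is_amod sc M"
  shows "mzero M \<in> mcarrier M"
    "x \<in> mcarrier M \<Longrightarrow> y \<in> mcarrier M \<Longrightarrow> madd M x y \<in> mcarrier M"
    "x \<in> mcarrier M \<Longrightarrow> msc M c x \<in> mcarrier M"
    "x \<in> mcarrier M \<Longrightarrow> mact M a x \<in> mcarrier M"
    "x \<in> mcarrier M \<Longrightarrow> y \<in> mcarrier M \<Longrightarrow> z \<in> mcarrier M \<Longrightarrow>
      madd M (madd M x y) z = madd M x (madd M y z)"
    "x \<in> mcarrier M \<Longrightarrow> y \<in> mcarrier M \<Longrightarrow> madd M x y = madd M y x"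
    "x \<in> mcarrier M \<Longrightarrow> madd M (mzero M) x = x"
    "x \<in> mcarrier M \<Longrightarrow> madd M x (msc M (-1) x) = mzero M"
    "x \<in> mcarrier M \<Longrightarrow> mact M (a + b) x = madd M (mact M a x) (mact M b x)"
    "x \<in> mcarrier M \<Longrightarrow> mact M (a * b) x = mact M a (mact M b x)"
    "x \<in> mcarrier M \<Longrightarrow> mact M (sc c a) x = msc M c (mact M a x)"
  using assms unfolding is_amod_def Let_def by auto

lemma amod_idem_eq_zero:
  assumes M: "is_amod sc M" and z: "z \<in> mcarrier M" and zz: "madd M z z = z"
  shows "z = mzero M"
proof -
  have n: "msc M (-1) z \<in> mcarrier M"
    using is_amodD(3)[OF M z] .
  have "mzero M = madd M (madd M z z) (msc M (-1) z)"
    using is_amodD(8)[OF M z] zz by simp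
  also have "\<dots> = madd M z (mzero M)"
    using is_amodD(5)[OF M z z n] is_amodD(8)[OF M z] by simp
  also have "\<dots> = z"
    using is_amodD(6)[OF M z is_amodD(1)[OF M]] is_amodD(7)[OF M z] by simp
  finally show ?thesis by simp
qed

lemma amod_homD:
  assumes "amod_hom M N f"
  shows "x \<in> mcarrier M \<Longrightarrow> f x \<in> mcarrier N"
    "x \<in> mcarrier M \<Longrightarrow> y \<in> mcarrier M \<Longrightarrow> f (madd M x y) = madd N (f x) (f y)"
    "x \<in> mcarrier M \<Longrightarrow> f (msc M c x) = msc N c (f x)"
    "x \<in> mcarrier M \<Longrightarrow> f (mact M a x) = mact N a (f x)"
  using assms unfolding amod_hom_def by auto

lemma amod_hom_comp:
  "amod_hom M N f \<Longrightarrow> amod_hom N P g \<Longrightarrow> amod_hom M P (g \<circ> f)"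
  unfolding amod_hom_def by auto

lemma amod_hom_zero:
  assumes M: "is_amod sc M" and N: "is_amod sc N" and f: "amod_hom M N f"
  shows "f (mzero M) = mzero N"
proof -
  have z: "mzero M \<in> mcarrier M"
    by (rule is_amodD(1)[OF M])
  have "madd N (f (mzero M)) (f (mzero M)) = f (mzero M)"
    using amod_homD(2)[OF f z z] is_amodD(7)[OF M z] by simp
  then show ?thesis
    using amod_idem_eq_zero[OF N amod_homD(1)[OF f z]] by simp
qed

lemma msum_closed:
  "is_amod sc M \<Longrightarrow> set xs \<subseteq> mcarrier M \<Longrightarrow> msum M xs \<in> mcarrier M"
  by (induct xs) (auto simp: msum_def is_amodD)

lemma amod_hom_msum:
  assumes M: "is_amod sc M" and N: "is_amod sc N" and f: "amod_hom M N f"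
  shows "set xs \<subseteq> mcarrier M \<Longrightarrow> f (msum M xs) = msum N (map f xs)"
proof (induct xs)
  case Nil
  then show ?case
    using amod_hom_zero[OF M N f] by (simp add: msum_def)
next
  case (Cons x xs)
  then show ?case
    using amod_homD(2)[OF f, of x "msum M xs"] msum_closed[OF M, of xs]
    by (simp add: msum_def)
qed

lemma is_amod_Ae_mod:
  assumes sc: "calg sc"
  shows "is_amod sc (Ae_mod sc e)"
  unfolding is_amod_def Let_def Ae_mod_def amod.simps
  using calgD[OF sc] calg_add_scale_minus_one[OF sc]
  by (auto simp: add.assoc add.commute distrib_left distrib_right mult.assoc)
    (metis distrib_right mult.assoc mult_zero_left)+

lemma msum_Ae_mod: "msum (Ae_mod sc e) xs = sum_list xs"
  by (induct xs) (simp_all add: msum_def Ae_mod_def)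

lemma amod_hom_from_Ae_mod:
  assumes ee: "e * e = e" and f: "amod_hom (Ae_mod sc e) M f"
    and u: "u \<in> mcarrier (Ae_mod sc e)"
  shows "f u = mact M u (f e)"
proof -
  have "e \<in> mcarrier (Ae_mod sc e)" and "u * e = u"
    using ee u by (auto simp: Ae_mod_def mult.assoc intro: exI[of _ e])
  then show ?thesis
    using amod_homD(4)[OF f, of e u] by (simp add: Ae_mod_def)
qed

lemma amod_hom_into_Ae_mod:
  "amod_hom M (Ae_mod sc e) g \<Longrightarrow> x \<in> mcarrier M \<Longrightarrow> g (mact M a x) = a * g x"
  using amod_homD(4) by (fastforce simp: Ae_mod_def)

section \<open>Rank-one endomorphisms and the pseudotrace\<close>

lemma pt_dataD:
  assumes "pt_data sc M e bs"
  shows "e * e = e"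
    "p \<in> set bs \<Longrightarrow> amod_hom (Ae_mod sc e) M (fst p)"
    "p \<in> set bs \<Longrightarrow> amod_hom M (Ae_mod sc e) (snd p)"
    "\<xi> \<in> mcarrier M \<Longrightarrow> msum M (map (\<lambda>p. fst p (snd p \<xi>)) bs) = \<xi>"
  using assms unfolding pt_data_def by auto

lemma pt_data_eq_zeroI:
  assumes sc: "calg sc" and M: "is_amod sc M" and pt: "pt_data sc M e bs"
    and \<xi>: "\<xi> \<in> mcarrier M" and zero: "\<And>p. p \<in> set bs \<Longrightarrow> snd p \<xi> = 0"
  shows "\<xi> = mzero M"
proof -
  have "fst p (snd p \<xi>) = mzero M" if "p \<in> set bs" for p
    using amod_hom_zero[OF is_amod_Ae_mod[OF sc] M pt_dataD(2)[OF pt that]] zero[OF that]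
    by (simp add: Ae_mod_def)
  then have "msum M (map (\<lambda>p. fst p (snd p \<xi>)) bs) = msum M (map (\<lambda>p. mzero M) bs)"
    by (metis (mono_tags, lifting) map_eq_conv)
  also have "\<dots> = mzero M"
    by (induct bs) (simp_all add: msum_def is_amodD(1,7)[OF M])
  finally show ?thesis
    using pt_dataD(4)[OF pt \<xi>] by simp
qed

lemma pt_data_hom_expand:
  assumes M: "is_amod sc M" and N: "is_amod sc N"
    and pt: "pt_data sc M e bs" and f: "amod_hom M N f" and \<xi>: "\<xi> \<in> mcarrier M"
  shows "f \<xi> = msum N (map (\<lambda>p. mact N (snd p \<xi>) (f (fst p e))) bs)"
proof -
  have ee: "e * e = e"
    using pt_dataD(1)[OF pt] .
  have e: "e \<in> mcarrier (Ae_mod sc e)"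
    using ee by (auto simp: Ae_mod_def intro: exI[of _ e])
  have sub: "set (map (\<lambda>p. fst p (snd p \<xi>)) bs) \<subseteq> mcarrier M"
    using amod_homD(1)[OF pt_dataD(2)[OF pt] amod_homD(1)[OF pt_dataD(3)[OF pt] \<xi>]] by auto
  have "f (fst p (snd p \<xi>)) = mact N (snd p \<xi>) (f (fst p e))" if p: "p \<in> set bs" for p
    using amod_hom_from_Ae_mod[OF ee pt_dataD(2)[OF pt p] amod_homD(1)[OF pt_dataD(3)[OF pt p] \<xi>]]
      amod_homD(4)[OF f amod_homD(1)[OF pt_dataD(2)[OF pt p] e]]
    by simp
  then show ?thesis
    using amod_hom_msum[OF M N f sub] pt_dataD(4)[OF pt \<xi>] by (simp cong: map_cong)
qed

lemma pt_data_hom_expand_Ae_mod: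
  assumes "calg sc" "is_amod sc M" "pt_data sc M e bs"
    and "amod_hom M (Ae_mod sc e') g" "\<xi> \<in> mcarrier M"
  shows "g \<xi> = (\<Sum>p\<leftarrow>bs. snd p \<xi> * g (fst p e))"
  using pt_data_hom_expand[OF assms(2) is_amod_Ae_mod[OF assms(1)] assms(3-5)]
  unfolding msum_Ae_mod by (simp add: Ae_mod_def)

lemma SLF_commute: "SLF sc \<psi> \<Longrightarrow> \<psi> (x * y) = \<psi> (y * x)"
  unfolding SLF_def by blast

lemma SLF_sum_list:
  assumes "SLF sc \<psi>"
  shows "\<psi> (\<Sum>x\<leftarrow>xs. f x) = (\<Sum>x\<leftarrow>xs. \<psi> (f x))"
proof -
  have add: "\<psi> (x + y) = \<psi> x + \<psi> y" for x y
    using assms unfolding SLF_def by blast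
  then have "\<psi> 0 = 0"
    by (metis add_cancel_right_right add_0)
  then show ?thesis
    by (induct xs) (simp_all add: add)
qed

definition rank_one_end :: "('a::ring, 'm) amod \<Rightarrow> ('m \<Rightarrow> 'a) \<Rightarrow> 'a \<Rightarrow> 'm \<Rightarrow> 'm \<Rightarrow> 'm" where
  "rank_one_end M g c \<eta> = (\<lambda>\<zeta>. mact M (g \<zeta> * c) \<eta>)"

lemma amod_hom_rank_one_end:
  assumes sc: "calg sc" and M: "is_amod sc M" and g: "amod_hom M (Ae_mod sc e') g"
    and \<eta>: "\<eta> \<in> mcarrier M"
  shows "amod_hom M M (rank_one_end M g c \<eta>)"
  unfolding amod_hom_def rank_one_end_def
proof (intro conjI ballI allI)
  fix \<zeta> \<zeta>'
  assume \<zeta>: "\<zeta> \<in> mcarrier M" and \<zeta>': "\<zeta>' \<in> mcarrier M"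
  show "mact M (g (madd M \<zeta> \<zeta>') * c) \<eta> = madd M (mact M (g \<zeta> * c) \<eta>) (mact M (g \<zeta>' * c) \<eta>)"
    using amod_homD(2)[OF g \<zeta> \<zeta>'] is_amodD(9)[OF M \<eta>] by (simp add: Ae_mod_def distrib_right)
next
  fix \<zeta> k assume \<zeta>: "\<zeta> \<in> mcarrier M"
  show "mact M (g (msc M k \<zeta>) * c) \<eta> = msc M k (mact M (g \<zeta> * c) \<eta>)"
    using amod_homD(3)[OF g \<zeta>] is_amodD(11)[OF M \<eta>] by (simp add: Ae_mod_def calgD(5)[OF sc, symmetric])
next
  fix \<zeta> a assume \<zeta>: "\<zeta> \<in> mcarrier M"
  show "mact M (g (mact M a \<zeta>) * c) \<eta> = mact M a (mact M (g \<zeta> * c) \<eta>)"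
    using amod_hom_into_Ae_mod[OF g \<zeta>] is_amodD(10)[OF M \<eta>] by (simp add: mult.assoc)
qed (rule is_amodD(4)[OF M \<eta>])

lemma pseudotrace_comp_rank_one_end:
  assumes sc: "calg sc" and M: "is_amod sc M" and \<psi>: "SLF sc \<psi>" and pt: "pt_data sc M e bs"
    and g: "amod_hom M (Ae_mod sc e') g" and \<eta>: "\<eta> \<in> mcarrier M" and y: "amod_hom M M y"
  shows "pseudotrace \<psi> e bs (y \<circ> rank_one_end M g c \<eta>) = \<psi> (c * g (y \<eta>))"
proof -
  have "\<psi> (snd p (y (rank_one_end M g c \<eta> (fst p e)))) = \<psi> (c * (snd p (y \<eta>) * g (fst p e)))"
    if p: "p \<in> set bs" for p
  proof -
    have "snd p (y (rank_one_end M g c \<eta> (fst p e))) = g (fst p e) * (c * snd p (y \<eta>))"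
      unfolding rank_one_end_def
      using amod_homD(4)[OF y \<eta>] amod_hom_into_Ae_mod[OF pt_dataD(3)[OF pt p] amod_homD(1)[OF y \<eta>]]
      by (simp add: mult.assoc)
    then show ?thesis
      using SLF_commute[OF \<psi>, of "g (fst p e)" "c * snd p (y \<eta>)"] by (simp add: mult.assoc)
  qed
  then have "pseudotrace \<psi> e bs (y \<circ> rank_one_end M g c \<eta>)
      = (\<Sum>p\<leftarrow>bs. \<psi> (c * (snd p (y \<eta>) * g (fst p e))))"
    unfolding pseudotrace_def by (simp cong: map_cong)
  also have "\<dots> = \<psi> (c * (\<Sum>p\<leftarrow>bs. snd p (y \<eta>) * g (fst p e)))"
    unfolding SLF_sum_list[OF \<psi>, symmetric] sum_list_const_mult ..
  also have "\<dots> = \<psi> (c * g (y \<eta>))"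
    using pt_data_hom_expand_Ae_mod[OF sc M pt g amod_homD(1)[OF y \<eta>]] by simp
  finally show ?thesis .
qed

lemma pseudotrace_rank_one_end_comp:
  assumes sc: "calg sc" and M: "is_amod sc M" and \<psi>: "SLF sc \<psi>" and pt: "pt_data sc M e bs"
    and g: "amod_hom M (Ae_mod sc e') g" and \<eta>: "\<eta> \<in> mcarrier M" and y: "amod_hom M M y"
  shows "pseudotrace \<psi> e bs (rank_one_end M g c \<eta> \<circ> y) = \<psi> (c * g (y \<eta>))"
proof -
  have "\<psi> (snd p (rank_one_end M g c \<eta> (y (fst p e)))) = \<psi> (c * (snd p \<eta> * g (y (fst p e))))"
    if p: "p \<in> set bs" for p
  proof -
    have "snd p (rank_one_end M g c \<eta> (y (fst p e))) = g (y (fst p e)) * (c * snd p \<eta>)"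
      unfolding rank_one_end_def
      using amod_hom_into_Ae_mod[OF pt_dataD(3)[OF pt p] \<eta>] by (simp add: mult.assoc)
    then show ?thesis
      using SLF_commute[OF \<psi>, of "g (y (fst p e))" "c * snd p \<eta>"] by (simp add: mult.assoc)
  qed
  then have "pseudotrace \<psi> e bs (rank_one_end M g c \<eta> \<circ> y)
      = (\<Sum>p\<leftarrow>bs. \<psi> (c * (snd p \<eta> * (g \<circ> y) (fst p e))))"
    unfolding pseudotrace_def by (simp cong: map_cong)
  also have "\<dots> = \<psi> (c * (\<Sum>p\<leftarrow>bs. snd p \<eta> * (g \<circ> y) (fst p e)))"
    unfolding SLF_sum_list[OF \<psi>, symmetric] sum_list_const_mult ..
  also have "\<dots> = \<psi> (c * g (y \<eta>))"
    using pt_data_hom_expand_Ae_mod[OF sc M pt amod_hom_comp[OF y g] \<eta>] by simp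
  finally show ?thesis .
qed

lemma nondeg_B_if_nondeg_A:
  assumes sc: "calg sc" and M: "is_amod sc M" and \<psi>: "SLF sc \<psi>" and pt: "pt_data sc M e bs"
    and nondeg: "nondeg_A \<psi>"
  shows "nondeg_B M (pseudotrace \<psi> e bs)"
  unfolding nondeg_B_def
proof (intro allI impI ballI)
  fix x \<xi>
  assume "amod_hom M M x \<and> (\<forall>y. amod_hom M M y \<longrightarrow> pseudotrace \<psi> e bs (y \<circ> x) = 0)"
    and \<xi>: "\<xi> \<in> mcarrier M"
  then have x: "amod_hom M M x" and radical: "\<And>y. amod_hom M M y \<Longrightarrow> pseudotrace \<psi> e bs (y \<circ> x) = 0"
    by auto
  have "snd p (x \<xi>) = 0" if p: "p \<in> set bs" for p
  proof -
    have "\<psi> (snd p (x \<xi>) * c) = 0" for c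
      using radical[OF amod_hom_rank_one_end[OF sc M pt_dataD(3)[OF pt p] \<xi>, of c]]
        pseudotrace_rank_one_end_comp[OF sc M \<psi> pt pt_dataD(3)[OF pt p] \<xi> x, of c]
        SLF_commute[OF \<psi>] by simp
    then show ?thesis
      using nondeg unfolding nondeg_A_def by blast
  qed
  then show "x \<xi> = mzero M"
    using pt_data_eq_zeroI[OF sc M pt amod_homD(1)[OF x \<xi>]] by blast
qed

section \<open>Local units and the trace ideal of \<open>M\<close>\<close>

lemma sum_orthogonal_idempotents_unit:
  fixes G :: "'a::ring set"
  assumes fin: "finite G" and idem: "\<forall>f\<in>G. f * f = f"
    and orth: "\<forall>f\<in>G. \<forall>g\<in>G. f \<noteq> g \<longrightarrow> f * g = 0" and f: "f \<in> G"
  shows "\<Sum>G * f = f" "f * \<Sum>G = f"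
proof -
  have "\<Sum>G * f = f * f + (\<Sum>g\<in>G - {f}. g * f)"
    using sum.remove[OF fin f] by (simp add: sum_distrib_right)
  also have "(\<Sum>g\<in>G - {f}. g * f) = 0"
    using orth f by (intro sum.neutral) auto
  finally show "\<Sum>G * f = f"
    using idem f by simp
  have "f * \<Sum>G = f * f + (\<Sum>g\<in>G - {f}. f * g)"
    using sum.remove[OF fin f] by (simp add: sum_distrib_left)
  also have "(\<Sum>g\<in>G - {f}. f * g) = 0"
    using orth f by (intro sum.neutral) auto
  finally show "f * \<Sum>G = f"
    using idem f by simp
qed

lemma sum_list_mult_sum_list_eq_zero:
  fixes x :: "'a::ring"
  assumes "\<And>a b. a \<in> set as \<Longrightarrow> b \<in> set bs \<Longrightarrow> a * x * b = 0"
  shows "sum_list as * x * sum_list bs = 0"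
proof -
  have "a * x * sum_list bs = 0" if "a \<in> set as" for a
    using assms[OF that] by (induct bs) (simp_all add: distrib_left)
  then show ?thesis
    by (induct as) (simp_all add: distrib_right)
qed

lemma AUF_local_unit:
  fixes sc :: "complex \<Rightarrow> 'a::ring \<Rightarrow> 'a" and a :: 'a
  assumes "AUF sc"
  shows "\<exists>u. u * u = u \<and> u * a = a \<and> a * u = a"
proof -
  obtain E where idem: "\<forall>e\<in>E. e * e = e" and orth: "\<forall>e\<in>E. \<forall>f\<in>E. e \<noteq> f \<longrightarrow> e * f = 0"
    and decomp: "\<exists>F g. finite F \<and> F \<subseteq> E \<times> E \<and>
      (\<forall>p\<in>F. g p \<in> corner (fst p) (snd p)) \<and> a = (\<Sum>p\<in>F. g p)"
    using assms unfolding AUF_def by blast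
  then obtain F g where fin: "finite F" and FE: "F \<subseteq> E \<times> E"
    and g: "\<forall>p\<in>F. g p \<in> corner (fst p) (snd p)" and a: "a = (\<Sum>p\<in>F. g p)"
    by blast
  define G where "G = fst ` F \<union> snd ` F"
  have "finite G" "G \<subseteq> E"
    using fin FE unfolding G_def by auto
  then have G: "finite G" "\<forall>f\<in>G. f * f = f" "\<forall>f\<in>G. \<forall>g\<in>G. f \<noteq> g \<longrightarrow> f * g = 0"
    using idem orth by blast+
  note unit = sum_orthogonal_idempotents_unit[OF G]
  have "\<Sum>G * \<Sum>G = \<Sum>G"
    using unit(1) by (simp add: sum_distrib_left)
  moreover have unit_g: "\<Sum>G * g p = g p \<and> g p * \<Sum>G = g p" if p: "p \<in> F" for p
  proof -
    obtain c where "g p = fst p * c * snd p"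
      using g p unfolding corner_def by blast
    moreover have "\<Sum>G * fst p = fst p" "snd p * \<Sum>G = snd p"
      using unit p unfolding G_def by auto
    ultimately show ?thesis
      by (metis mult.assoc)
  qed
  moreover have "\<Sum>G * a = a" "a * \<Sum>G = a"
    unfolding a sum_distrib_left[of "\<Sum>G" g F] sum_distrib_right[of g F "\<Sum>G"]
    using unit_g by (auto intro: sum.cong)
  ultimately show ?thesis
    by blast
qed

definition amod_transport :: "('u \<Rightarrow> 'v) \<Rightarrow> ('v \<Rightarrow> 'u) \<Rightarrow> ('a, 'u) amod \<Rightarrow> ('a, 'v) amod" where
  "amod_transport i j M = \<lparr>mcarrier = i ` mcarrier M, madd = (\<lambda>x y. i (madd M (j x) (j y))),
     mzero = i (mzero M), msc = (\<lambda>c x. i (msc M c (j x))), mact = (\<lambda>a x. i (mact M a (j x)))\<rparr>"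

lemma is_amod_transport:
  assumes "is_amod sc M" and "\<And>x. j (i x) = x"
  shows "is_amod sc (amod_transport i j M)"
  using assms unfolding is_amod_def Let_def amod_transport_def by auto

lemma amod_hom_transport_inverse:
  assumes "\<And>x. j (i x) = x"
  shows "amod_hom (amod_transport i j M) M j"
  using assms unfolding amod_hom_def amod_transport_def by auto

definition univ_emb :: "'a \<Rightarrow> 'a univ" where
  "univ_emb a = {\<lambda>_. (0, a)}"

lemma inj_univ_emb: "inj univ_emb"
  by (rule injI) (auto simp: univ_emb_def dest: fun_cong[where x = 0])

text \<open>Generation in \<open>proj_gen_Coh\<close> is only tested on modules carried by \<open>'a univ\<close>,
  so the module \<open>A u\<close> is copied onto that type.\<close>

definition Ae_univ :: "(complex \<Rightarrow> 'a::ring \<Rightarrow> 'a) \<Rightarrow> 'a \<Rightarrow> ('a, 'a univ) amod" where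
  "Ae_univ sc u = amod_transport univ_emb (inv univ_emb) (Ae_mod sc u)"

lemma Ae_univ_simps:
  "mcarrier (Ae_univ sc u) = univ_emb ` {a * u |a. True}"
  "mact (Ae_univ sc u) a (univ_emb b) = univ_emb (a * b)"
  unfolding Ae_univ_def amod_transport_def Ae_mod_def by (simp_all add: inj_univ_emb)

lemma univ_emb_in_Ae_univ: "univ_emb (a * u) \<in> mcarrier (Ae_univ sc u)"
  unfolding Ae_univ_simps by blast

lemma is_amod_Ae_univ: "calg sc \<Longrightarrow> is_amod sc (Ae_univ sc u)"
  unfolding Ae_univ_def by (intro is_amod_transport is_amod_Ae_mod) (simp_all add: inj_univ_emb)

lemma coherent_Ae_univ:
  fixes sc :: "complex \<Rightarrow> 'a::ring \<Rightarrow> 'a"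
  assumes sc: "calg sc" and A: "AUF sc" and uu: "u * u = u"
  shows "coherent (Ae_univ sc u)"
proof -
  have "\<exists>v. x = mact (Ae_univ sc u) v x" if x: "x \<in> mcarrier (Ae_univ sc u)" for x
  proof -
    obtain b where x: "x = univ_emb (b * u)"
      using x unfolding Ae_univ_simps by blast
    obtain v where "v * (b * u) = b * u"
      using AUF_local_unit[OF A] by blast
    then show ?thesis
      unfolding x Ae_univ_simps by metis
  qed
  moreover have "univ_emb u \<in> mcarrier (Ae_univ sc u)"
    using univ_emb_in_Ae_univ[of u u] uu by simp
  moreover have "submod (Ae_univ sc u) (mcarrier (Ae_univ sc u))"
    using is_amod_Ae_univ[OF sc] unfolding submod_def is_amod_def Let_def by auto
  moreover have "mcarrier (Ae_univ sc u) \<subseteq> S" if "submod (Ae_univ sc u) S" "univ_emb u \<in> S" for S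
    using that unfolding submod_def by (force simp: Ae_univ_simps)
  ultimately have "gen_submod (Ae_univ sc u) {univ_emb u} = mcarrier (Ae_univ sc u)"
    and "quasicoherent (Ae_univ sc u)"
    unfolding gen_submod_def quasicoherent_def by blast+
  with \<open>univ_emb u \<in> mcarrier (Ae_univ sc u)\<close> show ?thesis
    unfolding coherent_def fin_generated_def by (metis empty_subsetI finite.intros insert_subset)
qed

lemma idempotent_in_trace_ideal:
  fixes sc :: "complex \<Rightarrow> 'a::ring \<Rightarrow> 'a" and M :: "('a, 'm) amod"
  assumes sc: "calg sc" and A: "AUF sc" and M: "proj_gen_Coh sc M" and uu: "u * u = u"
  shows "\<exists>gs. (\<forall>(g, \<xi>)\<in>set gs. amod_hom M (Ae_mod sc u) g \<and> \<xi> \<in> mcarrier M)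
    \<and> u = (\<Sum>(g, \<xi>)\<leftarrow>gs. g \<xi>)"
proof -
  let ?N = "Ae_univ sc u" and ?j = "inv univ_emb"
  have N: "is_amod sc ?N"
    by (rule is_amod_Ae_univ[OF sc])
  have j: "amod_hom ?N (Ae_mod sc u) ?j"
    unfolding Ae_univ_def by (rule amod_hom_transport_inverse) (simp add: inj_univ_emb)
  obtain fs where fs: "\<forall>f\<in>set fs. amod_hom M ?N f"
    and gen: "\<forall>y\<in>mcarrier ?N. \<exists>xs. length xs = length fs \<and> set xs \<subseteq> mcarrier M \<and>
      y = msum ?N (map2 (\<lambda>f x. f x) fs xs)"
    using M N coherent_Ae_univ[OF sc A uu] unfolding proj_gen_Coh_def by blast
  have "univ_emb u \<in> mcarrier ?N"
    using univ_emb_in_Ae_univ[of u u] uu by simp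
  then obtain xs where xs: "set xs \<subseteq> mcarrier M"
    and u: "univ_emb u = msum ?N (map2 (\<lambda>f x. f x) fs xs)"
    using gen by blast
  have "set (map2 (\<lambda>f x. f x) fs xs) \<subseteq> mcarrier ?N"
    using fs xs amod_homD(1) by (fastforce dest: set_zip_leftD set_zip_rightD)
  then have "u = (\<Sum>y\<leftarrow>map2 (\<lambda>f x. f x) fs xs. ?j y)"
    using arg_cong[OF u, of ?j] amod_hom_msum[OF N is_amod_Ae_mod[OF sc] j]
    by (simp add: msum_Ae_mod inv_f_f[OF inj_univ_emb])
  moreover have "\<forall>(g, \<xi>)\<in>set (map (\<lambda>(f, \<xi>). (?j \<circ> f, \<xi>)) (zip fs xs)).
      amod_hom M (Ae_mod sc u) g \<and> \<xi> \<in> mcarrier M"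
    using fs xs amod_hom_comp[OF _ j] by (fastforce dest: set_zip_leftD set_zip_rightD)
  moreover have "(\<Sum>y\<leftarrow>map2 (\<lambda>f x. f x) fs xs. ?j y)
      = (\<Sum>(g, \<xi>)\<leftarrow>map (\<lambda>(f, \<xi>). (?j \<circ> f, \<xi>)) (zip fs xs). g \<xi>)"
    by (simp add: case_prod_unfold comp_def)
  ultimately show ?thesis
    by metis
qed

lemma trace_ideal_annihilates_radical:
  assumes sc: "calg sc" and M: "is_amod sc M" and \<psi>: "SLF sc \<psi>" and pt: "pt_data sc M e bs"
    and nondeg: "nondeg_B M (pseudotrace \<psi> e bs)" and radical: "\<And>y. \<psi> (x * y) = 0"
    and g: "amod_hom M (Ae_mod sc e\<^sub>1) g" and g': "amod_hom M (Ae_mod sc e\<^sub>2) g'"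
    and \<xi>: "\<xi> \<in> mcarrier M" and \<xi>': "\<xi>' \<in> mcarrier M"
  shows "g \<xi> * x * g' \<xi>' = 0"
proof -
  let ?T = "rank_one_end M g x \<xi>'"
  have T: "amod_hom M M ?T"
    by (rule amod_hom_rank_one_end[OF sc M g \<xi>'])
  have "pseudotrace \<psi> e bs (y \<circ> ?T) = 0" if "amod_hom M M y" for y
    using pseudotrace_comp_rank_one_end[OF sc M \<psi> pt g \<xi>' that] radical by simp
  then have "?T \<xi> = mzero M"
    using nondeg T \<xi> unfolding nondeg_B_def by blast
  then have "g' (?T \<xi>) = 0"
    using amod_hom_zero[OF M is_amod_Ae_mod[OF sc] g'] by (simp add: Ae_mod_def)
  moreover have "g' (?T \<xi>) = g \<xi> * x * g' \<xi>'"
    unfolding rank_one_end_def by (rule amod_hom_into_Ae_mod[OF g' \<xi>'])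
  ultimately show ?thesis
    by simp
qed

lemma nondeg_A_if_nondeg_B:
  fixes sc :: "complex \<Rightarrow> 'a::ring \<Rightarrow> 'a" and M :: "('a, 'm) amod"
  assumes sc: "calg sc" and A: "AUF sc" and M: "is_amod sc M" and gen: "proj_gen_Coh sc M"
    and \<psi>: "SLF sc \<psi>" and pt: "pt_data sc M e bs" and nondeg: "nondeg_B M (pseudotrace \<psi> e bs)"
  shows "nondeg_A \<psi>"
  unfolding nondeg_A_def
proof (intro allI impI)
  fix x
  assume radical: "\<forall>y. \<psi> (x * y) = 0"
  obtain u where uu: "u * u = u" and ux: "u * x = x" and xu: "x * u = x"
    using AUF_local_unit[OF A] by blast
  obtain gs where gs: "\<forall>(g, \<xi>)\<in>set gs. amod_hom M (Ae_mod sc u) g \<and> \<xi> \<in> mcarrier M"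
    and u: "u = (\<Sum>(g, \<xi>)\<leftarrow>gs. g \<xi>)"
    using idempotent_in_trace_ideal[OF sc A gen uu] by blast
  have "x = u * x * u"
    using ux xu by (simp add: mult.assoc)
  also have "\<dots> = 0"
    unfolding u using gs
    by (intro sum_list_mult_sum_list_eq_zero)
      (auto intro: trace_ideal_annihilates_radical[OF sc M \<psi> pt nondeg radical[rule_format]])
  finally show "x = 0" .
qed

theorem theorem10p4:
  fixes sc :: "complex \<Rightarrow> 'a::ring \<Rightarrow> 'a"
    and M :: "('a, 'm) amod"
    and \<psi> :: "'a \<Rightarrow> complex"
    and e :: 'a
    and bs :: "(('a \<Rightarrow> 'm) \<times> ('m \<Rightarrow> 'a)) list"
  assumes "calg sc"
    and "strongly_AUF sc"
    and "is_amod sc M"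
    and "proj_gen_Coh sc M"
    and "SLF sc \<psi>"
    and "pt_data sc M e bs"
  shows "nondeg_A \<psi> \<longleftrightarrow> nondeg_B M (pseudotrace \<psi> e bs)"
proof
  show "nondeg_A \<psi> \<Longrightarrow> nondeg_B M (pseudotrace \<psi> e bs)"
    by (rule nondeg_B_if_nondeg_A[OF assms(1,3,5,6)])
  have "AUF sc"
    using assms(2) unfolding strongly_AUF_def by blast
  then show "nondeg_B M (pseudotrace \<psi> e bs) \<Longrightarrow> nondeg_A \<psi>"
    by (rule nondeg_A_if_nondeg_B[OF assms(1) _ assms(3-6)])
qed

end
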